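(* Let $n \geq 2$, $k \geq 1$, $M_1, \dots, M_k \in \mathrm{GL}_n(\mathbb{R})$, $\mathbf g_1, \dots, \mathbf g_k \in \mathbb{R}^n$, $G_i := M_i \cdot \mathbb{Z}^n + \mathbf g_i$ for $1 \le i \le k$, and $F := \bigcup_{i=1}^k G_i$. Let $\mathbf b \in \mathbb{S}^{n-1}$. The following are equivalent. \begin{enumerate} \item $\phi_\varepsilon[F](\mathbf x, \mathbf b)$ is well defined for all $\varepsilon > 0$ and all $\mathbf x \in \mathbb{R}^n$. \item There is an index $i \in \{1, \dots, k\}$ such that $\phi_\varepsilon[G_i](\mathbf x, \mathbf b)$ is well defined for all $\varepsilon > 0$ and all $\mathbf x \in \mathbb{R}^n$. \item At least one of the vectors $M_1^{-1}\mathbf b, \dots, M_k^{-1}\mathbf b$ has rationally independent components. \end{enumerate}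
   Context: For $\mathbf a \in \mathbb{R}^n$, $\mathbf b \in \mathbb{S}^{n-1}$, $l > 0$, let $L(\mathbf a, \mathbf b, l) := \{\mathbf a + \lambda \mathbf b : -l \le \lambda \le l\}$. For $S \subset \mathbb{R}^n$ and $\varepsilon > 0$, the directional visibility function is \[ \phi_\varepsilon[S](\mathbf a, \mathbf b) := \inf\Big\{ l > 0 : L(\mathbf a, \mathbf b, l) \cap \bigcup_{\mathbf s \in S} B_2(\mathbf s, \varepsilon) \neq \varnothing \Big\}, \] where $B_2(\mathbf s,\varepsilon)$ is the open Euclidean ball; it is called well defined at $(\mathbf a, \mathbf b)$ when the set over which the infimum is taken is nonempty. A vector $\mathbf v \in \mathbb{R}^n$ has rationally independent components if there is no $\mathbf q \in \mathbb{Z}^n \setminus \{\mathbf 0\}$ with $\mathbf q \cdot \mathbf v = 0$. *)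

theory Defs
  imports "HOL-Analysis.Analysis"
begin

definition seg :: "real^'n \<Rightarrow> real^'n \<Rightarrow> real \<Rightarrow> (real^'n) set" where
  "seg a b l = {a + t *\<^sub>R b | t. -l \<le> t \<and> t \<le> l}"

definition vis_set :: "(real^'n) set \<Rightarrow> real \<Rightarrow> real^'n \<Rightarrow> real^'n \<Rightarrow> real set" where
  "vis_set S \<epsilon> a b = {l. l > 0 \<and> seg a b l \<inter> (\<Union>s\<in>S. ball s \<epsilon>) \<noteq> {}}"

definition dir_vis :: "(real^'n) set \<Rightarrow> real \<Rightarrow> real^'n \<Rightarrow> real^'n \<Rightarrow> real" where
  "dir_vis S \<epsilon> a b = Inf (vis_set S \<epsilon> a b)"

definition dir_vis_well_defined :: "(real^'n) set \<Rightarrow> real \<Rightarrow> real^'n \<Rightarrow> real^'n \<Rightarrow> bool" where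
  "dir_vis_well_defined S \<epsilon> a b \<longleftrightarrow> vis_set S \<epsilon> a b \<noteq> {}"

definition rationally_independent :: "real^'n \<Rightarrow> bool" where
  "rationally_independent v \<longleftrightarrow>
     \<not> (\<exists>q::int^'n. q \<noteq> 0 \<and> (\<Sum>i\<in>UNIV. of_int (q $ i) * v $ i) = 0)"

definition shifted_lattice :: "real^'n^'n \<Rightarrow> real^'n \<Rightarrow> (real^'n) set" where
  "shifted_lattice M g = {M *v (\<chi> j. of_int (z $ j)) + g | z::int^'n. True}"

end

theory Submission
  imports Defs "HOL-Analysis.Kronecker_Approximation_Theorem"
begin

text \<open>
  Read the line a + t b in the lattice coordinates of G = M \<int>^n + g, i.e. as
  M^-1 (a - g) + t M^-1 b. If M^-1 b has rationally independent components, Kronecker's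
  simultaneous approximation theorem brings this line arbitrarily close to an integer point,
  so it meets every \<epsilon>-neighbourhood of G. Otherwise an integer relation q gives the functional
  w = q M^-1, which vanishes on b and takes values in w \<bullet> g + \<int> on G; on a line along
  which the constant w \<bullet> x - w \<bullet> g is not an integer, the line stays at positive distance from G. For finitely many
  lattices the exceptional level sets of all these functionals are countably many hyperplanes,
  a null set, so one line avoids all of them and a single \<epsilon> works for the whole union.
\<close>

lemma
  fixes M :: "'a::semiring_1^'n^'n"
  assumes "invertible M"
  shows matrix_inv_left: "matrix_inv M ** M = mat 1"
    and matrix_inv_right: "M ** matrix_inv M = mat 1"
proof -
  have "\<exists>M'. M ** M' = mat 1 \<and> M' ** M = mat 1"
    using assms by (simp add: invertible_def)
  from someI_ex[OF this] show "matrix_inv M ** M = mat 1" "M ** matrix_inv M = mat 1"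
    by (simp_all add: matrix_inv_def)
qed

lemma dir_vis_well_defined_iff:
  "dir_vis_well_defined S e a b \<longleftrightarrow> (\<exists>t. \<exists>s\<in>S. dist s (a + t *\<^sub>R b) < e)"
proof
  assume "dir_vis_well_defined S e a b"
  then obtain l where "seg a b l \<inter> (\<Union>s\<in>S. ball s e) \<noteq> {}"
    by (auto simp: dir_vis_well_defined_def vis_set_def)
  then show "\<exists>t. \<exists>s\<in>S. dist s (a + t *\<^sub>R b) < e"
    by (auto simp: seg_def)
next
  assume "\<exists>t. \<exists>s\<in>S. dist s (a + t *\<^sub>R b) < e"
  then obtain t s where "s \<in> S" "dist s (a + t *\<^sub>R b) < e" by blast
  moreover have "a + t *\<^sub>R b \<in> seg a b (\<bar>t\<bar> + 1)"
    unfolding seg_def by force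
  ultimately have "\<bar>t\<bar> + 1 \<in> vis_set S e a b"
    unfolding vis_set_def by force
  then show "dir_vis_well_defined S e a b"
    by (auto simp: dir_vis_well_defined_def)
qed

lemma dir_vis_well_defined_mono:
  assumes "dir_vis_well_defined S e a b" and "S \<subseteq> T" and "e \<le> e'"
  shows "dir_vis_well_defined T e' a b"
  using assms unfolding dir_vis_well_defined_iff by (meson order_less_le_trans subsetD)

lemma dir_vis_well_defined_UN:
  "dir_vis_well_defined (\<Union>i\<in>I. S i) e a b \<longleftrightarrow> (\<exists>i\<in>I. dir_vis_well_defined (S i) e a b)"
  unfolding dir_vis_well_defined_iff by blast

lemma Kronecker_no_integer_relation:
  fixes \<theta> \<alpha> :: "nat \<Rightarrow> real"
  assumes no_rel: "\<And>k::nat \<Rightarrow> int. (\<Sum>i<n. of_int (k i) * \<theta> i) = 0 \<Longrightarrow> \<forall>i<n. k i = 0"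
    and "\<epsilon> > 0"
  obtains t h where "\<And>i. i < n \<Longrightarrow> \<bar>t * \<theta> i - of_int (h i) - \<alpha> i\<bar> < \<epsilon>"
proof -
  interpret Modules.module "\<lambda>r. (*) (real_of_int r)"
    by (simp add: Modules.module.intro distrib_left mult.commute)
  have inj: "inj_on \<theta> {..<n}"
  proof (rule inj_onI, rule ccontr)
    fix i j assume ij: "i \<in> {..<n}" "j \<in> {..<n}" "\<theta> i = \<theta> j" "i \<noteq> j"
    define k :: "nat \<Rightarrow> int" where "k m = (if m = i then 1 else if m = j then -1 else 0)" for m
    have "(\<Sum>m<n. of_int (k m) * \<theta> m) = (\<Sum>m\<in>{i, j}. of_int (k m) * \<theta> m)"
      by (rule sum.mono_neutral_right) (use ij in \<open>auto simp: k_def\<close>)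
    also have "\<dots> = 0"
      using ij by (simp add: k_def)
    finally show False
      using no_rel[of k] ij by (auto simp: k_def)
  qed
  have indep: "independent (\<theta> ` {..<n})"
    unfolding independent_explicit_module
  proof (intro allI impI)
    fix T u w
    assume T: "finite T" "T \<subseteq> \<theta> ` {..<n}" "(\<Sum>w\<in>T. real_of_int (u w) * w) = 0" "w \<in> T"
    define k where "k i = (if \<theta> i \<in> T then u (\<theta> i) else 0)" for i
    have "(\<Sum>i<n. of_int (k i) * \<theta> i) = (\<Sum>i\<in>{i\<in>{..<n}. \<theta> i \<in> T}. of_int (u (\<theta> i)) * \<theta> i)"
      by (rule sum.mono_neutral_cong_right) (auto simp: k_def)
    also have "\<dots> = (\<Sum>w\<in>\<theta> ` {i\<in>{..<n}. \<theta> i \<in> T}. real_of_int (u w) * w)"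
      by (rule sum.reindex[symmetric, unfolded comp_def]) (rule inj_on_subset[OF inj], auto)
    also have "\<theta> ` {i\<in>{..<n}. \<theta> i \<in> T} = T"
      using T by auto
    finally have "\<forall>i<n. k i = 0"
      using T(3) no_rel by simp
    moreover obtain i where "i < n" "w = \<theta> i"
      using T by auto
    ultimately show "u w = 0"
      using T(4) by (auto simp: k_def)
  qed
  show ?thesis
    using Kronecker_thm_1[OF indep inj \<open>\<epsilon> > 0\<close>, where \<alpha>=\<alpha>] that by blast
qed

lemma rationally_independent_simultaneous_approx:
  fixes v y :: "real^'n"
  assumes "rationally_independent v" and "\<epsilon> > 0"
  obtains t and z :: "int^'n" where "\<And>j. \<bar>y $ j + t * v $ j - of_int (z $ j)\<bar> < \<epsilon>"
proof -
  obtain f where f: "bij_betw f {..<CARD('n)} (UNIV::'n set)"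
    using ex_bij_betw_nat_finite[of "UNIV::'n set"] by (auto simp: atLeast0LessThan)
  define f' where "f' = inv_into {..<CARD('n)} f"
  have f': "bij_betw f' UNIV {..<CARD('n)}" "\<And>j. f (f' j) = j" "\<And>i. i < CARD('n) \<Longrightarrow> f' (f i) = i"
    unfolding f'_def using bij_betw_inv_into[OF f] bij_betw_inv_into_right[OF f]
      bij_betw_inv_into_left[OF f] by auto
  have no_rel: "\<forall>i<CARD('n). k i = 0" if rel: "(\<Sum>i<CARD('n). of_int (k i) * v $ f i) = 0" for k
  proof -
    have "(\<Sum>j\<in>UNIV. of_int (k (f' j)) * v $ j) = (\<Sum>j\<in>UNIV. of_int (k (f' j)) * v $ f (f' j))"
      by (simp add: f'(2))
    also have "\<dots> = 0"
      using sum.reindex_bij_betw[OF f'(1), of "\<lambda>i. of_int (k i) * v $ f i"] rel by simp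
    finally have "(\<chi> j. k (f' j)) = 0"
      using assms(1) unfolding rationally_independent_def by fastforce
    then have "k (f' (f i)) = 0" for i
      by (metis vec_lambda_beta zero_index)
    then show ?thesis
      using f'(3) by metis
  qed
  then obtain t h where th: "\<And>i. i < CARD('n) \<Longrightarrow> \<bar>t * v $ f i - of_int (h i) - - y $ f i\<bar> < \<epsilon>"
    using Kronecker_no_integer_relation[where \<theta>="\<lambda>i. v $ f i" and \<alpha>="\<lambda>i. - y $ f i",
        OF no_rel assms(2)]
    by blast
  show thesis
  proof (rule that[of t "\<chi> j. h (f' j)"])
    fix j
    have "f' j < CARD('n)"
      using f'(1) by (auto simp: bij_betw_def)
    then show "\<bar>y $ j + t * v $ j - of_int ((\<chi> j. h (f' j)) $ j)\<bar> < \<epsilon>"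
      using th[of "f' j"] by (simp add: f'(2) algebra_simps)
  qed
qed

lemma dir_vis_well_defined_shifted_lattice:
  fixes M :: "real^'n^'n"
  assumes "invertible M" and "rationally_independent (matrix_inv M *v b)" and "e > 0"
  shows "dir_vis_well_defined (shifted_lattice M g) e a b"
proof -
  obtain K where K: "K > 0" "\<And>w. norm (M *v w) \<le> norm w * K"
    using bounded_linear.pos_bounded[OF matrix_vector_mul_bounded_linear[of M]] by blast
  define \<delta> where "\<delta> = e / (K * CARD('n))"
  have "\<delta> > 0"
    using K \<open>e > 0\<close> by (simp add: \<delta>_def)
  define y where "y = matrix_inv M *v (a - g)"
  obtain t and z :: "int^'n"
    where tz: "\<And>j. \<bar>y $ j + t * (matrix_inv M *v b) $ j - of_int (z $ j)\<bar> < \<delta>"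
    using rationally_independent_simultaneous_approx[OF assms(2) \<open>\<delta> > 0\<close>] by blast
  define s where "s = M *v (\<chi> j. of_int (z $ j)) + g"
  define w where "w = y + t *\<^sub>R (matrix_inv M *v b) - (\<chi> j. of_int (z $ j))"
  have "a + t *\<^sub>R b - s = M *v w"
    using matrix_inv_right[OF assms(1)]
    by (simp add: s_def w_def y_def matrix_vector_right_distrib matrix_vector_mult_diff_distrib
        matrix_vector_mult_scaleR matrix_vector_mul_assoc algebra_simps)
  then have "dist s (a + t *\<^sub>R b) \<le> norm w * K"
    by (metis K(2) dist_norm norm_minus_commute)
  also have "\<dots> < CARD('n) * \<delta> * K"
  proof -
    have "norm w \<le> (\<Sum>j\<in>UNIV. \<bar>w $ j\<bar>)"
      by (rule norm_le_l1_cart)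
    also have "\<dots> < (\<Sum>j\<in>(UNIV::'n set). \<delta>)"
      by (rule sum_strict_mono) (auto simp: w_def tz)
    finally show ?thesis
      using K by simp
  qed
  also have "\<dots> = e"
    using K by (simp add: \<delta>_def)
  finally have "dist s (a + t *\<^sub>R b) < e" .
  moreover have "s \<in> shifted_lattice M g"
    unfolding shifted_lattice_def s_def by blast
  ultimately show ?thesis
    unfolding dir_vis_well_defined_iff by blast
qed

lemma shifted_lattice_integral_functional:
  fixes M :: "real^'n^'n"
  assumes "invertible M" and "\<not> rationally_independent (matrix_inv M *v b)"
  obtains w where "w \<noteq> 0" and "w \<bullet> b = 0"
    and "\<And>s. s \<in> shifted_lattice M g \<Longrightarrow> w \<bullet> s - w \<bullet> g \<in> \<int>"
proof -
  obtain q :: "int^'n" where "q \<noteq> 0"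
    and rel: "(\<Sum>i\<in>UNIV. of_int (q $ i) * (matrix_inv M *v b) $ i) = 0"
    using assms(2) by (auto simp: rationally_independent_def)
  define qr :: "real^'n" where "qr = (\<chi> i. of_int (q $ i))"
  define w where "w = qr v* matrix_inv M"
  have w_inner: "w \<bullet> y = qr \<bullet> (matrix_inv M *v y)" for y
    by (simp add: w_def dot_lmul_matrix)
  show thesis
  proof
    have "w v* M = qr"
      by (simp add: w_def vector_matrix_mul_assoc matrix_inv_left[OF assms(1)])
    moreover have "qr \<noteq> 0"
      using \<open>q \<noteq> 0\<close> by (auto simp: qr_def vec_eq_iff)
    ultimately show "w \<noteq> 0"
      by auto
    have "w \<bullet> b = qr \<bullet> (matrix_inv M *v b)"
      by (rule w_inner)
    also have "\<dots> = 0"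
      using rel by (simp add: inner_vec_def qr_def)
    finally show "w \<bullet> b = 0" .
  next
    fix s assume "s \<in> shifted_lattice M g"
    then obtain z :: "int^'n" where s: "s = M *v (\<chi> j. of_int (z $ j)) + g"
      by (auto simp: shifted_lattice_def)
    have "w \<bullet> s - w \<bullet> g = qr \<bullet> (\<chi> j. of_int (z $ j))"
      by (simp add: s w_inner matrix_vector_right_distrib matrix_vector_mul_assoc
          matrix_inv_left[OF assms(1)] inner_add_right)
    also have "\<dots> = of_int (\<Sum>j\<in>UNIV. q $ j * z $ j)"
      by (simp add: qr_def inner_vec_def)
    finally show "w \<bullet> s - w \<bullet> g \<in> \<int>"
      by (metis Ints_of_int)
  qed
qed

lemma exists_point_off_integral_hyperplanes:
  fixes w :: "'i \<Rightarrow> 'a::euclidean_space" and c :: "'i \<Rightarrow> real"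
  assumes "countable I" and "\<And>i. i \<in> I \<Longrightarrow> w i \<noteq> 0"
  obtains a where "\<And>i. i \<in> I \<Longrightarrow> w i \<bullet> a - c i \<notin> \<int>"
proof -
  define H where "H = (\<lambda>(i, m::int). {x. w i \<bullet> x = of_int m + c i}) ` (I \<times> UNIV)"
  have "negligible (\<Union>H)"
  proof (rule negligible_countable_Union)
    show "countable H"
      unfolding H_def using assms(1) by (intro countable_image countable_SIGMA) auto
    show "negligible S" if "S \<in> H" for S
      using that assms(2) by (auto simp: H_def intro: negligible_hyperplane)
  qed
  then obtain a where a: "a \<notin> \<Union>H"
    by (metis UNIV_I non_negligible_UNIV subsetI subset_antisym)
  show thesis
  proof (rule that)
    fix i assume "i \<in> I"
    show "w i \<bullet> a - c i \<notin> \<int>"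
    proof
      assume "w i \<bullet> a - c i \<in> \<int>"
      then obtain m where "w i \<bullet> a - c i = of_int m"
        by (auto elim: Ints_cases)
      then have "a \<in> {x. w i \<bullet> x = of_int m + c i}"
        by simp
      then show False
        using a \<open>i \<in> I\<close> by (auto simp: H_def)
    qed
  qed
qed

lemma not_dir_vis_well_defined_off_integral_hyperplanes:
  fixes w :: "real^'n"
  assumes "w \<bullet> b = 0" and "\<And>s. s \<in> S \<Longrightarrow> w \<bullet> s - c \<in> \<int>" and "w \<bullet> a - c \<notin> \<int>"
  obtains e where "e > 0" and "\<not> dir_vis_well_defined S e a b"
proof -
  obtain \<delta> where "\<delta> > 0" and \<delta>: "ball (w \<bullet> a - c) \<delta> \<subseteq> - \<int>"
    using assms(3) closed_Ints open_contains_ball[of "- \<int>"] unfolding closed_def by blast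
  have "norm w + 1 > 0"
    using norm_ge_zero[of w] by linarith
  define e where "e = \<delta> / (norm w + 1)"
  have "e > 0"
    using \<open>\<delta> > 0\<close> \<open>norm w + 1 > 0\<close> by (simp add: e_def)
  have "\<not> dist s (a + t *\<^sub>R b) < e" if "s \<in> S" for s t
  proof
    assume close: "dist s (a + t *\<^sub>R b) < e"
    have "dist (w \<bullet> a - c) (w \<bullet> s - c) = \<bar>w \<bullet> (a + t *\<^sub>R b - s)\<bar>"
      using assms(1) by (simp add: dist_real_def inner_diff_right inner_add_right)
    also have "\<dots> \<le> norm w * dist s (a + t *\<^sub>R b)"
      by (metis Cauchy_Schwarz_ineq2 dist_norm norm_minus_commute)
    also have "\<dots> \<le> norm w * e"
      using close by (simp add: mult_left_mono)
    also have "\<dots> < (norm w + 1) * e"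
      using \<open>e > 0\<close> by simp
    also have "\<dots> = \<delta>"
      using \<open>norm w + 1 > 0\<close> by (simp add: e_def)
    finally have "w \<bullet> s - c \<in> ball (w \<bullet> a - c) \<delta>"
      by (simp only: mem_ball)
    then show False
      using \<delta> assms(2)[OF that] by blast
  qed
  then show thesis
    using that \<open>e > 0\<close> by (auto simp: dir_vis_well_defined_iff)
qed

lemma not_dir_vis_well_defined_UN_shifted_lattice:
  fixes M :: "'i \<Rightarrow> real^'n^'n"
  assumes "finite I" and "\<And>i. i \<in> I \<Longrightarrow> invertible (M i)"
    and "\<And>i. i \<in> I \<Longrightarrow> \<not> rationally_independent (matrix_inv (M i) *v b)"
  obtains e a where "e > 0"
    and "\<not> dir_vis_well_defined (\<Union>i\<in>I. shifted_lattice (M i) (g i)) e a b"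
proof -
  have "\<forall>i\<in>I. \<exists>w. w \<noteq> 0 \<and> w \<bullet> b = 0 \<and>
      (\<forall>s\<in>shifted_lattice (M i) (g i). w \<bullet> s - w \<bullet> g i \<in> \<int>)"
    by (metis shifted_lattice_integral_functional assms(2,3))
  then obtain w where w: "\<And>i. i \<in> I \<Longrightarrow> w i \<noteq> 0 \<and> w i \<bullet> b = 0 \<and>
      (\<forall>s\<in>shifted_lattice (M i) (g i). w i \<bullet> s - w i \<bullet> g i \<in> \<int>)"
    by metis
  obtain a where a: "\<And>i. i \<in> I \<Longrightarrow> w i \<bullet> a - w i \<bullet> g i \<notin> \<int>"
    using exists_point_off_integral_hyperplanes[where w=w and c="\<lambda>i. w i \<bullet> g i"]
      countable_finite[OF assms(1)] w by blast
  have "\<forall>i\<in>I. \<exists>e>0. \<not> dir_vis_well_defined (shifted_lattice (M i) (g i)) e a b"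
    by (metis w a not_dir_vis_well_defined_off_integral_hyperplanes)
  then obtain e where e: "\<And>i. i \<in> I \<Longrightarrow> e i > 0"
    "\<And>i. i \<in> I \<Longrightarrow> \<not> dir_vis_well_defined (shifted_lattice (M i) (g i)) (e i) a b"
    by metis
  define e0 where "e0 = Min (insert 1 (e ` I))"
  have "e0 > 0"
    unfolding e0_def using assms(1) e(1) by (subst Min_gr_iff) auto
  moreover have "\<not> dir_vis_well_defined (shifted_lattice (M i) (g i)) e0 a b" if "i \<in> I" for i
  proof -
    have "e0 \<le> e i"
      unfolding e0_def using assms(1) that by (intro Min_le) auto
    then show ?thesis
      using e(2)[OF that] dir_vis_well_defined_mono by blast
  qed
  ultimately show thesis
    using that by (auto simp: dir_vis_well_defined_UN)
qed

lemma dir_vis_well_defined_UN_shifted_lattice_iff: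
  fixes M :: "'i \<Rightarrow> real^'n^'n"
  assumes "finite I" and "\<And>i. i \<in> I \<Longrightarrow> invertible (M i)"
  shows "(\<forall>e>0. \<forall>a. dir_vis_well_defined (\<Union>i\<in>I. shifted_lattice (M i) (g i)) e a b)
    \<longleftrightarrow> (\<exists>i\<in>I. rationally_independent (matrix_inv (M i) *v b))"
proof
  assume wd: "\<forall>e>0. \<forall>a. dir_vis_well_defined (\<Union>i\<in>I. shifted_lattice (M i) (g i)) e a b"
  show "\<exists>i\<in>I. rationally_independent (matrix_inv (M i) *v b)"
  proof (rule ccontr)
    assume "\<not> ?thesis"
    then obtain e a where "e > 0"
      and "\<not> dir_vis_well_defined (\<Union>i\<in>I. shifted_lattice (M i) (g i)) e a b"
      using not_dir_vis_well_defined_UN_shifted_lattice[where I=I and M=M and b=b and g=g] assms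
      by blast
    then show False
      using wd by blast
  qed
next
  assume "\<exists>i\<in>I. rationally_independent (matrix_inv (M i) *v b)"
  then obtain i where "i \<in> I" and "rationally_independent (matrix_inv (M i) *v b)"
    by blast
  then show "\<forall>e>0. \<forall>a. dir_vis_well_defined (\<Union>i\<in>I. shifted_lattice (M i) (g i)) e a b"
    using dir_vis_well_defined_shifted_lattice[OF assms(2)] dir_vis_well_defined_UN by blast
qed

theorem lemma2p1:
  fixes k :: nat
    and M :: "nat \<Rightarrow> real^'n^'n"
    and g :: "nat \<Rightarrow> real^'n"
    and b :: "real^'n"
  assumes n2: "CARD('n) \<ge> 2"
    and k1: "k \<ge> 1"
    and inv: "\<And>i. i \<in> {1..k} \<Longrightarrow> invertible (M i)"
    and b_unit: "norm b = 1"
  defines "G \<equiv> (\<lambda>i. shifted_lattice (M i) (g i))"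
    and "F \<equiv> (\<Union>i\<in>{1..k}. shifted_lattice (M i) (g i))"
  shows "((\<forall>\<epsilon>>0. \<forall>x. dir_vis_well_defined F \<epsilon> x b)
            \<longleftrightarrow> (\<exists>i\<in>{1..k}. \<forall>\<epsilon>>0. \<forall>x. dir_vis_well_defined (G i) \<epsilon> x b))
       \<and> ((\<exists>i\<in>{1..k}. \<forall>\<epsilon>>0. \<forall>x. dir_vis_well_defined (G i) \<epsilon> x b)
            \<longleftrightarrow> (\<exists>i\<in>{1..k}. rationally_independent (matrix_inv (M i) *v b)))"
proof -
  have F_iff: "(\<forall>\<epsilon>>0. \<forall>x. dir_vis_well_defined F \<epsilon> x b)
      \<longleftrightarrow> (\<exists>i\<in>{1..k}. rationally_independent (matrix_inv (M i) *v b))"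
    unfolding F_def using dir_vis_well_defined_UN_shifted_lattice_iff[of "{1..k}" M] inv by simp
  have G_iff: "(\<forall>\<epsilon>>0. \<forall>x. dir_vis_well_defined (G i) \<epsilon> x b)
      \<longleftrightarrow> rationally_independent (matrix_inv (M i) *v b)" if "i \<in> {1..k}" for i
    unfolding G_def using dir_vis_well_defined_UN_shifted_lattice_iff[of "{i}" M] inv that by simp
  show ?thesis
    using F_iff G_iff by blast
qed

end
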